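(* Let $S$ be an $\omega$-cocontinuous $M$-module. For all $M$-wGCL programs $C$, the transformer $\mathsf{wlp}[C]$ is a well-defined $\omega$-cocontinuous endofunction on the module of weightings over $S$. In particular, if $\Phi_f$ is the $\mathsf{wlp}$-characteristic function of $\mathtt{while}(\varphi)\{C\}$ with respect to postweighting $f$, i.e.\ $\Phi_f(X) = [\neg\varphi]\cdot f \oplus [\varphi]\cdot \mathsf{wlp}[C](X)$, then \[ \mathsf{wlp}[\mathtt{while}(\varphi)\{C\}](f) \;=\; \bigwedge_{i \in \mathbb{N}} \Phi_f^i(\top), \] where $\bigwedge$ denotes the infimum (meet) with respect to the natural order and $\top$ is the greatest element of the module of weightings.
   Context: $M=(M,\odot,1)$ is a monoid of weights. An $M$-module $S$ is a commutative monoid $(S,\oplus,\mathbf{0})$ with an associative, distributive left action (scalar multiplication) $\otimes\colon M\times S\to S$ such that $1\otimes a=a$ and $v\otimes\mathbf{0}=\mathbf{0}$. The natural order is $a\preceq b$ iff $\exists c:\ a\oplus c=b$. $S$ is $\omega$-cocontinuous if the reversed natural order is a pointed $\omega$-cpo (so a greatest element $\top$ exists and infima of decreasing chains exist) and $\oplus$, $\otimes$ are $\omega$-continuous with respect to it. Weightings are functions $f\colon\Sigma\to S$ from program states to $S$, with operations, order, $\top$ and meets lifted pointwise. wGCL programs are built from assignments $x:=E$, sequential composition $C_1;C_2$, conditionals $\mathtt{if}(\varphi)\{C_1\}\mathtt{else}\{C_2\}$, branching $\{C_1\}\oplus\{C_2\}$, weighting statements $\odot a$ with $a\in M$, and loops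 $\mathtt{while}(\varphi)\{C\}$. For a predicate $\varphi$, $([\varphi]\cdot f)(\sigma)=f(\sigma)$ if $\sigma\models\varphi$ and $\mathbf{0}$ otherwise. The weakest liberal preweighting transformer $\mathsf{wlp}$ is defined inductively: $\mathsf{wlp}[x:=E](f)=f[x/E]$; $\mathsf{wlp}[C_1;C_2](f)=\mathsf{wlp}[C_1](\mathsf{wlp}[C_2](f))$; $\mathsf{wlp}[\mathtt{if}(\varphi)\{C_1\}\mathtt{else}\{C_2\}](f)=[\varphi]\cdot\mathsf{wlp}[C_1](f)\oplus[\neg\varphi]\cdot\mathsf{wlp}[C_2](f)$; $\mathsf{wlp}[\{C_1\}\oplus\{C_2\}](f)=\mathsf{wlp}[C_1](f)\oplus\mathsf{wlp}[C_2](f)$; $\mathsf{wlp}[\odot a](f)=a\otimes f$; and $\mathsf{wlp}[\mathtt{while}(\varphi)\{C\}](f)$ is the greatest fixed point of $\Phi_f$. *)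

theory Defs
  imports Main
begin

text \<open>Monoid of weights: type class monoid_mult (product = weight multiplication, 1 = unit).
  Module carrier: type class comm_monoid_add (+ = oplus, 0 = zero); the scalar action is a parameter.\<close>

definition is_module :: "('m::monoid_mult \<Rightarrow> 's::comm_monoid_add \<Rightarrow> 's) \<Rightarrow> bool" where
  "is_module act \<longleftrightarrow>
     (\<forall>a. act 1 a = a) \<and>
     (\<forall>v w a. act (v * w) a = act v (act w a)) \<and>
     (\<forall>v a b. act v (a + b) = act v a + act v b) \<and>
     (\<forall>v. act v 0 = 0)"

definition nle :: "'s::comm_monoid_add \<Rightarrow> 's \<Rightarrow> bool" where
  "nle a b \<longleftrightarrow> (\<exists>c. a + c = b)"

definition is_inf :: "('a \<Rightarrow> 'a \<Rightarrow> bool) \<Rightarrow> 'a set \<Rightarrow> 'a \<Rightarrow> bool" where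
  "is_inf le A x \<longleftrightarrow> (\<forall>a\<in>A. le x a) \<and> (\<forall>y. (\<forall>a\<in>A. le y a) \<longrightarrow> le y x)"

definition decreasing :: "('a \<Rightarrow> 'a \<Rightarrow> bool) \<Rightarrow> (nat \<Rightarrow> 'a) \<Rightarrow> bool" where
  "decreasing le s \<longleftrightarrow> (\<forall>i. le (s (Suc i)) (s i))"

definition omega_cocont :: "('a \<Rightarrow> 'a \<Rightarrow> bool) \<Rightarrow> ('b \<Rightarrow> 'b \<Rightarrow> bool) \<Rightarrow> ('a \<Rightarrow> 'b) \<Rightarrow> bool" where
  "omega_cocont le1 le2 F \<longleftrightarrow>
     (\<forall>s x. decreasing le1 s \<longrightarrow> is_inf le1 (range s) x \<longrightarrow> is_inf le2 (range (\<lambda>i. F (s i))) (F x))"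

text \<open>S is an omega-cocontinuous M-module: reversed natural order is a pointed omega-cpo
  (partial order, greatest element, infima of decreasing chains), and oplus, otimes are
  omega-continuous w.r.t. it (oplus jointly in both arguments, otimes in its module argument).\<close>
definition omega_cocontinuous_module :: "('m::monoid_mult \<Rightarrow> 's::comm_monoid_add \<Rightarrow> 's) \<Rightarrow> bool" where
  "omega_cocontinuous_module (act :: 'm \<Rightarrow> 's \<Rightarrow> 's) \<longleftrightarrow>
     (\<forall>a b :: 's. nle a b \<longrightarrow> nle b a \<longrightarrow> a = b) \<and>
     (\<exists>t :: 's. \<forall>a. nle a t) \<and>
     (\<forall>s :: nat \<Rightarrow> 's. decreasing nle s \<longrightarrow> (\<exists>x. is_inf nle (range s) x)) \<and>
     (\<forall>(s :: nat \<Rightarrow> 's) t x y. decreasing nle s \<longrightarrow> decreasing nle t \<longrightarrow>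
         is_inf nle (range s) x \<longrightarrow> is_inf nle (range t) y \<longrightarrow>
         is_inf nle (range (\<lambda>i. s i + t i)) (x + y)) \<and>
     (\<forall>v. omega_cocont nle nle (act v))"

definition ntop :: "'s::comm_monoid_add" where
  "ntop = (THE t. \<forall>a. nle a t)"

definition wle :: "('st \<Rightarrow> 's::comm_monoid_add) \<Rightarrow> ('st \<Rightarrow> 's) \<Rightarrow> bool" where
  "wle f g \<longleftrightarrow> (\<forall>\<sigma>. nle (f \<sigma>) (g \<sigma>))"

definition wtop :: "'st \<Rightarrow> 's::comm_monoid_add" where
  "wtop = (\<lambda>\<sigma>. ntop)"

definition is_gfp :: "('a \<Rightarrow> 'a \<Rightarrow> bool) \<Rightarrow> ('a \<Rightarrow> 'a) \<Rightarrow> 'a \<Rightarrow> bool" where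
  "is_gfp le F x \<longleftrightarrow> F x = x \<and> (\<forall>y. F y = y \<longrightarrow> le y x)"

definition gfp_w :: "(('st \<Rightarrow> 's::comm_monoid_add) \<Rightarrow> ('st \<Rightarrow> 's)) \<Rightarrow> ('st \<Rightarrow> 's)" where
  "gfp_w F = (THE x. is_gfp wle F x)"

type_synonym ('v, 'val) state = "'v \<Rightarrow> 'val"

datatype ('v, 'val, 'm) wgcl =
    Assign 'v "('v, 'val) state \<Rightarrow> 'val"
  | Seq "('v, 'val, 'm) wgcl" "('v, 'val, 'm) wgcl"
  | Ite "('v, 'val) state \<Rightarrow> bool" "('v, 'val, 'm) wgcl" "('v, 'val, 'm) wgcl"
  | Branch "('v, 'val, 'm) wgcl" "('v, 'val, 'm) wgcl"
  | Weight 'm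
  | While "('v, 'val) state \<Rightarrow> bool" "('v, 'val, 'm) wgcl"

definition guard :: "('st \<Rightarrow> bool) \<Rightarrow> ('st \<Rightarrow> 's::comm_monoid_add) \<Rightarrow> 'st \<Rightarrow> 's" where
  "guard P f = (\<lambda>\<sigma>. if P \<sigma> then f \<sigma> else 0)"

primrec wlp :: "('m::monoid_mult \<Rightarrow> 's::comm_monoid_add \<Rightarrow> 's) \<Rightarrow> ('v, 'val, 'm) wgcl
    \<Rightarrow> (('v, 'val) state \<Rightarrow> 's) \<Rightarrow> (('v, 'val) state \<Rightarrow> 's)" where
  "wlp act (Assign x E) f = (\<lambda>\<sigma>. f (\<sigma>(x := E \<sigma>)))"
| "wlp act (Seq C1 C2) f = wlp act C1 (wlp act C2 f)"
| "wlp act (Ite P C1 C2) f = (\<lambda>\<sigma>. guard P (wlp act C1 f) \<sigma> + guard (\<lambda>\<tau>. \<not> P \<tau>) (wlp act C2 f) \<sigma>)"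
| "wlp act (Branch C1 C2) f = (\<lambda>\<sigma>. wlp act C1 f \<sigma> + wlp act C2 f \<sigma>)"
| "wlp act (Weight a) f = (\<lambda>\<sigma>. act a (f \<sigma>))"
| "wlp act (While P C) f =
     gfp_w (\<lambda>X \<sigma>. guard (\<lambda>\<tau>. \<not> P \<tau>) f \<sigma> + guard P (wlp act C X) \<sigma>)"

definition wlp_char :: "('m::monoid_mult \<Rightarrow> 's::comm_monoid_add \<Rightarrow> 's) \<Rightarrow> (('v, 'val) state \<Rightarrow> bool)
    \<Rightarrow> ('v, 'val, 'm) wgcl \<Rightarrow> (('v, 'val) state \<Rightarrow> 's) \<Rightarrow> (('v, 'val) state \<Rightarrow> 's) \<Rightarrow> (('v, 'val) state \<Rightarrow> 's)" where
  "wlp_char act P C f X = (\<lambda>\<sigma>. guard (\<lambda>\<tau>. \<not> P \<tau>) f \<sigma> + guard P (wlp act C X) \<sigma>)"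

end

theory Submission
  imports Defs
begin

text \<open>Every wlp transformer is assembled from constants, guards, substitutions into the
  postweighting, the scalar action and pointwise sums; each of these is
  \<open>\<omega>\<close>-cocontinuous on weightings, and cocontinuity is closed under composition. For a loop,
  the dual Kleene theorem identifies the greatest fixed point of \<open>\<Phi>\<^sub>f\<close> with
  \<open>\<Sqinter>\<^sub>i \<Phi>\<^sub>f\<^sup>i(\<top>)\<close>. Each iterate \<open>\<Phi>\<^sub>f\<^sup>i(\<top>)\<close> depends cocontinuously on \<open>f\<close>, and
  infima of a doubly indexed family may be taken in either order, so the loop transformer is
  cocontinuous as well.\<close>

lemma nle_refl: "nle a a"
  unfolding nle_def by (rule exI[of _ 0]) simp

lemma nle_trans: "nle a b \<Longrightarrow> nle b c \<Longrightarrow> nle a c"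
  unfolding nle_def by (metis add.assoc)

lemma is_inf_range_iff:
  "is_inf le (range s) x \<longleftrightarrow> (\<forall>i. le x (s i)) \<and> (\<forall>y. (\<forall>i. le y (s i)) \<longrightarrow> le y x)"
  by (simp add: is_inf_def)

lemma is_inf_unique: "antisymp le \<Longrightarrow> is_inf le A x \<Longrightarrow> is_inf le A y \<Longrightarrow> x = y"
  unfolding is_inf_def by (blast dest: antisympD)

lemma omega_cocont_imp_mono:
  assumes "reflp le1" and cocont: "omega_cocont le1 le2 F" and "le1 a b"
  shows "le2 (F a) (F b)"
proof -
  define s where "s = (\<lambda>i::nat. if i = 0 then b else a)"
  have "decreasing le1 s" "is_inf le1 (range s) a"
    using assms unfolding decreasing_def is_inf_range_iff s_def by (auto dest: reflpD)
  then have "is_inf le2 (range (\<lambda>i. F (s i))) (F a)"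
    using cocont unfolding omega_cocont_def by blast
  then show ?thesis unfolding is_inf_range_iff s_def by (metis (full_types))
qed

lemma decreasing_image:
  "reflp le1 \<Longrightarrow> omega_cocont le1 le2 F \<Longrightarrow> decreasing le1 s \<Longrightarrow> decreasing le2 (\<lambda>i. F (s i))"
  unfolding decreasing_def by (blast intro: omega_cocont_imp_mono)

lemma omega_cocont_const: "reflp le2 \<Longrightarrow> omega_cocont le1 le2 (\<lambda>_. c)"
  unfolding omega_cocont_def is_inf_range_iff by (auto dest: reflpD)

lemma omega_cocont_comp:
  "reflp le1 \<Longrightarrow> omega_cocont le1 le2 G \<Longrightarrow> omega_cocont le2 le3 F
    \<Longrightarrow> omega_cocont le1 le3 (\<lambda>x. F (G x))"
  unfolding omega_cocont_def by (metis decreasing_image omega_cocont_def)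

lemma is_inf_iterated:
  assumes "transp le"
    and "\<And>n. is_inf le (range (\<lambda>i. a n i)) (b n)"
    and "\<And>i. is_inf le (range (\<lambda>n. a n i)) (c i)"
    and "is_inf le (range c) z"
  shows "is_inf le (range b) z"
  using assms unfolding is_inf_range_iff by (meson transpD)

lemma decreasing_iterates:
  assumes "reflp le" and "\<And>a. le a t" and "omega_cocont le le \<Phi>"
  shows "decreasing le (\<lambda>i. (\<Phi> ^^ i) t)"
proof -
  have "le ((\<Phi> ^^ Suc i) t) ((\<Phi> ^^ i) t)" for i
    by (induction i) (auto intro: assms omega_cocont_imp_mono[OF assms(1,3)])
  then show ?thesis unfolding decreasing_def by blast
qed

lemma is_gfp_inf_iterates:
  assumes refl: "reflp le" and trans: "transp le" and antisym: "antisymp le"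
    and top: "\<And>a. le a t" and cocont: "omega_cocont le le \<Phi>"
    and inf: "is_inf le (range (\<lambda>i. (\<Phi> ^^ i) t)) z"
  shows "is_gfp le \<Phi> z"
proof -
  let ?a = "\<lambda>i. (\<Phi> ^^ i) t"
  have dec: "decreasing le ?a" using decreasing_iterates[OF refl top cocont] .
  have "is_inf le (range (\<lambda>i. ?a (Suc i))) (\<Phi> z)"
    using cocont dec inf unfolding omega_cocont_def by simp
  \<comment> \<open>dropping the first element \<open>t\<close> of a decreasing chain does not change its infimum\<close>
  then have "is_inf le (range ?a) (\<Phi> z)"
    using dec trans unfolding is_inf_range_iff decreasing_def by (meson transpD)
  then have fixed: "\<Phi> z = z" using is_inf_unique[OF antisym _ inf] by blast
  have "le y z" if "\<Phi> y = y" for y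
  proof -
    have "le y (?a i)" for i
    proof (induction i)
      case 0
      show ?case using top by simp
    next
      case (Suc i)
      show ?case using omega_cocont_imp_mono[OF refl cocont Suc.IH] that by simp
    qed
    then show ?thesis using inf unfolding is_inf_range_iff by blast
  qed
  then show ?thesis using fixed unfolding is_gfp_def by blast
qed

lemma reflp_wle: "reflp wle"
  by (simp add: reflpI wle_def nle_refl)

lemma transp_wle: "transp wle"
  unfolding wle_def by (blast intro: transpI nle_trans)

lemma decreasing_wle_iff: "decreasing wle s \<longleftrightarrow> (\<forall>\<sigma>. decreasing nle (\<lambda>i. s i \<sigma>))"
  by (auto simp: decreasing_def wle_def)

lemma is_inf_wle_iff:
  "is_inf wle (range s) x \<longleftrightarrow> (\<forall>\<sigma>. is_inf nle (range (\<lambda>i. s i \<sigma>)) (x \<sigma>))"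
proof
  assume inf: "is_inf wle (range s) x"
  show "\<forall>\<sigma>. is_inf nle (range (\<lambda>i. s i \<sigma>)) (x \<sigma>)"
  proof
    fix \<sigma>
    have "nle y (x \<sigma>)" if "\<forall>i. nle y (s i \<sigma>)" for y
    proof -
      \<comment> \<open>a lower bound at \<open>\<sigma>\<close> is lifted by updating \<open>x\<close> at \<open>\<sigma>\<close> only\<close>
      have "\<forall>i. wle (x(\<sigma> := y)) (s i)" using that inf unfolding is_inf_range_iff wle_def by auto
      then have "wle (x(\<sigma> := y)) x" using inf unfolding is_inf_range_iff by blast
      then show ?thesis unfolding wle_def by (metis fun_upd_same)
    qed
    moreover have "\<forall>i. nle (x \<sigma>) (s i \<sigma>)" using inf unfolding is_inf_range_iff wle_def by blast
    ultimately show "is_inf nle (range (\<lambda>i. s i \<sigma>)) (x \<sigma>)" unfolding is_inf_range_iff by blast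
  qed
next
  assume "\<forall>\<sigma>. is_inf nle (range (\<lambda>i. s i \<sigma>)) (x \<sigma>)"
  then show "is_inf wle (range s) x" unfolding is_inf_range_iff wle_def by blast
qed

lemma omega_cocont_guard: "omega_cocont wle wle (guard P)"
  unfolding omega_cocont_def is_inf_wle_iff guard_def by (auto simp: is_inf_def nle_refl)

lemma omega_cocont_precomp: "omega_cocont wle wle (\<lambda>f \<sigma>. f (g \<sigma>))"
  unfolding omega_cocont_def is_inf_wle_iff by simp

lemma wlp_eqs:
  "wlp act (Assign x E) = (\<lambda>f \<sigma>. f (\<sigma>(x := E \<sigma>)))"
  "wlp act (Seq C1 C2) = (\<lambda>f. wlp act C1 (wlp act C2 f))"
  "wlp act (Ite P C1 C2) =
     (\<lambda>f \<sigma>. guard P (wlp act C1 f) \<sigma> + guard (\<lambda>\<tau>. \<not> P \<tau>) (wlp act C2 f) \<sigma>)"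
  "wlp act (Branch C1 C2) = (\<lambda>f \<sigma>. wlp act C1 f \<sigma> + wlp act C2 f \<sigma>)"
  "wlp act (Weight a) = (\<lambda>f \<sigma>. act a (f \<sigma>))"
  "wlp act (While P C) = (\<lambda>f. gfp_w (wlp_char act P C f))"
  by (simp_all add: fun_eq_iff wlp_char_def[abs_def])

locale cocont_module =
  fixes act :: "'m::monoid_mult \<Rightarrow> 's::comm_monoid_add \<Rightarrow> 's"
  assumes omega_cocontinuous_module: "omega_cocontinuous_module act"
begin

lemma antisymp_nle: "antisymp (nle :: 's \<Rightarrow> 's \<Rightarrow> bool)"
  using omega_cocontinuous_module unfolding omega_cocontinuous_module_def by (blast intro: antisympI)

lemma antisymp_wle: "antisymp (wle :: ('a \<Rightarrow> 's) \<Rightarrow> _)"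
  using antisymp_nle unfolding wle_def by (blast intro: antisympI dest: antisympD)

lemma nle_ntop: "nle a (ntop :: 's)"
proof -
  obtain t :: 's where t: "\<forall>a. nle a t"
    using omega_cocontinuous_module unfolding omega_cocontinuous_module_def by blast
  have "ntop = t" unfolding ntop_def
    by (rule the_equality) (use t antisymp_nle in \<open>auto dest: antisympD\<close>)
  then show ?thesis using t by simp
qed

lemma wle_wtop: "wle (f :: 'a \<Rightarrow> 's) wtop"
  by (simp add: wle_def wtop_def nle_ntop)

lemma decreasing_wle_has_inf:
  assumes "decreasing wle (s :: nat \<Rightarrow> 'a \<Rightarrow> 's)"
  shows "\<exists>x. is_inf wle (range s) x"
proof -
  have "\<forall>\<sigma>. \<exists>x. is_inf nle (range (\<lambda>i. s i \<sigma>)) x"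
    using assms omega_cocontinuous_module
    unfolding decreasing_wle_iff omega_cocontinuous_module_def by blast
  then show ?thesis unfolding is_inf_wle_iff by metis
qed

lemma omega_cocont_act: "omega_cocont wle wle (\<lambda>(f :: 'a \<Rightarrow> 's) \<sigma>. act v (f \<sigma>))"
  using omega_cocontinuous_module
  unfolding omega_cocontinuous_module_def omega_cocont_def is_inf_wle_iff decreasing_wle_iff
  by blast

lemma omega_cocont_add:
  fixes F G :: "('b \<Rightarrow> 't::comm_monoid_add) \<Rightarrow> 'a \<Rightarrow> 's"
  assumes F: "omega_cocont wle wle F" and G: "omega_cocont wle wle G"
  shows "omega_cocont wle wle (\<lambda>X \<sigma>. F X \<sigma> + G X \<sigma>)"
  unfolding omega_cocont_def
proof (intro allI impI)
  fix s :: "nat \<Rightarrow> 'b \<Rightarrow> 't" and x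
  assume dec: "decreasing wle s" and inf: "is_inf wle (range s) x"
  have "decreasing wle (\<lambda>i. F (s i))" "decreasing wle (\<lambda>i. G (s i))"
    using F G dec decreasing_image[OF reflp_wle] by blast+
  moreover have "is_inf wle (range (\<lambda>i. F (s i))) (F x)" "is_inf wle (range (\<lambda>i. G (s i))) (G x)"
    using F G dec inf unfolding omega_cocont_def by blast+
  ultimately show "is_inf wle (range (\<lambda>i \<sigma>. F (s i) \<sigma> + G (s i) \<sigma>)) (\<lambda>\<sigma>. F x \<sigma> + G x \<sigma>)"
    using omega_cocontinuous_module
    unfolding omega_cocontinuous_module_def is_inf_wle_iff decreasing_wle_iff by simp
qed

lemma gfp_w_inf_iterates:
  assumes cocont: "omega_cocont wle wle (\<Phi> :: ('a \<Rightarrow> 's) \<Rightarrow> ('a \<Rightarrow> 's))"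
  shows "is_gfp wle \<Phi> (gfp_w \<Phi>) \<and> is_inf wle (range (\<lambda>i. (\<Phi> ^^ i) wtop)) (gfp_w \<Phi>)"
proof -
  obtain z where inf: "is_inf wle (range (\<lambda>i. (\<Phi> ^^ i) wtop)) z"
    using decreasing_wle_has_inf decreasing_iterates[OF reflp_wle wle_wtop cocont] by blast
  have gfp: "is_gfp wle \<Phi> z"
    using is_gfp_inf_iterates[OF reflp_wle transp_wle antisymp_wle wle_wtop cocont inf] .
  have "gfp_w \<Phi> = z" unfolding gfp_w_def
    by (rule the_equality) (use gfp antisymp_wle in \<open>auto simp: is_gfp_def dest: antisympD\<close>)
  then show ?thesis using gfp inf by simp
qed

context
  fixes C :: "('v, 'val, 'm) wgcl"
  assumes cocont_C: "omega_cocont wle wle (wlp act C)"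
begin

lemma omega_cocont_guard_wlp: "omega_cocont wle wle (\<lambda>X. guard P (wlp act C X))"
  by (rule omega_cocont_comp[OF reflp_wle cocont_C omega_cocont_guard])

lemma omega_cocont_wlp_char: "omega_cocont wle wle (wlp_char act P C f)"
  unfolding wlp_char_def
  by (rule omega_cocont_add[OF omega_cocont_const[OF reflp_wle] omega_cocont_guard_wlp])

lemma omega_cocont_wlp_char_iterate:
  "omega_cocont wle wle (\<lambda>f. (wlp_char act P C f ^^ i) wtop)"
proof (induction i)
  case 0
  show ?case by (simp add: omega_cocont_const[OF reflp_wle])
next
  case (Suc i)
  have "(wlp_char act P C f ^^ Suc i) wtop =
      (\<lambda>\<sigma>. guard (\<lambda>\<tau>. \<not> P \<tau>) f \<sigma> + guard P (wlp act C ((wlp_char act P C f ^^ i) wtop)) \<sigma>)"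
    for f by (simp add: wlp_char_def)
  then show ?case
    by (simp only:) (rule omega_cocont_add[OF omega_cocont_guard
          omega_cocont_comp[OF reflp_wle Suc.IH omega_cocont_guard_wlp]])
qed

lemma omega_cocont_wlp_While: "omega_cocont wle wle (wlp act (While P C))"
  unfolding omega_cocont_def wlp_eqs
proof (intro allI impI)
  fix s :: "nat \<Rightarrow> ('v, 'val) state \<Rightarrow> 's" and x
  assume dec: "decreasing wle s" and inf: "is_inf wle (range s) x"
  show "is_inf wle (range (\<lambda>n. gfp_w (wlp_char act P C (s n)))) (gfp_w (wlp_char act P C x))"
  proof (rule is_inf_iterated[OF transp_wle])
    show "is_inf wle (range (\<lambda>i. (wlp_char act P C (s n) ^^ i) wtop)) (gfp_w (wlp_char act P C (s n)))"
      for n using gfp_w_inf_iterates[OF omega_cocont_wlp_char] by blast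
    show "is_inf wle (range (\<lambda>n. (wlp_char act P C (s n) ^^ i) wtop)) ((wlp_char act P C x ^^ i) wtop)"
      for i using omega_cocont_wlp_char_iterate dec inf unfolding omega_cocont_def by blast
    show "is_inf wle (range (\<lambda>i. (wlp_char act P C x ^^ i) wtop)) (gfp_w (wlp_char act P C x))"
      using gfp_w_inf_iterates[OF omega_cocont_wlp_char] by blast
  qed
qed

end

lemma omega_cocont_wlp: "omega_cocont wle wle (wlp act C)"
proof (induction C)
  case (Assign x E)
  show ?case unfolding wlp_eqs by (rule omega_cocont_precomp)
next
  case (Seq C1 C2)
  show ?case unfolding wlp_eqs by (rule omega_cocont_comp[OF reflp_wle Seq.IH(2,1)])
next
  case (Ite P C1 C2)
  show ?case unfolding wlp_eqs
    by (rule omega_cocont_add[OF omega_cocont_guard_wlp[OF Ite.IH(1)] omega_cocont_guard_wlp[OF Ite.IH(2)]])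
next
  case (Branch C1 C2)
  show ?case unfolding wlp_eqs by (rule omega_cocont_add[OF Branch.IH])
next
  case (Weight a)
  show ?case unfolding wlp_eqs by (rule omega_cocont_act)
next
  case (While P C)
  show ?case by (rule omega_cocont_wlp_While[OF While.IH])
qed

end

theorem mainTheorem4:
  fixes act :: "'m::monoid_mult \<Rightarrow> 's::comm_monoid_add \<Rightarrow> 's"
    and C :: "('v, 'val, 'm) wgcl"
  assumes "is_module act"
    and "omega_cocontinuous_module act"
  shows "omega_cocont wle wle (wlp act C)
    \<and> (\<forall>P f. is_gfp wle (wlp_char act P C f) (wlp act (While P C) f)
         \<and> is_inf wle (range (\<lambda>i. (wlp_char act P C f ^^ i) wtop)) (wlp act (While P C) f))"
proof -
  interpret cocont_module act using assms(2) by unfold_locales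
  have cocont_C: "omega_cocont wle wle (wlp act C)" by (rule omega_cocont_wlp)
  show ?thesis
    unfolding wlp_eqs using cocont_C gfp_w_inf_iterates[OF omega_cocont_wlp_char[OF cocont_C]]
    by blast
qed

end
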